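(* Let $0\le \alpha<2n$, $1<p_1,p_2<\infty$, $\frac1p=\frac1{p_1}+\frac1{p_2}$, $\frac1q=\frac1p-\frac{\alpha}{n}$, and suppose $q\ge p_2$. Let $w_1,w_2,v$ be weights on $\mathbb{R}^n$ and set $\sigma_i=w_i^{1-p_i'}$, $i=1,2$. Let \[ [\vec{w},v]_{S_{\vec{P},q}}:=\sup_{Q}\frac{\left(\int_{Q}\mathcal{M}_\alpha(\sigma_1 1_Q,\sigma_2 1_Q)^q\, v\,dx\right)^{1/q}}{\sigma_1(Q)^{1/p_1}\sigma_2(Q)^{1/p_2}}, \] supremum over all cubes $Q\subset\mathbb{R}^n$. Then for every dyadic grid $\mathscr{D}$, every $R\in\mathscr{D}$ and every function $f$ with $\operatorname{supp} f\subset R$, \[ \|1_R\,\mathcal{M}_\alpha^{\mathscr{D}}(1_R\sigma_1, f\sigma_2)\|_{L^q(v)}\le C\,[\vec{w},v]_{S_{\vec{P},q}}\,\sigma_1(R)^{1/p_1}\|f\|_{L^{p_2}(\sigma_2)}, \] where $C$ depends only on $n,\alpha,p_1,p_2$.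
   Context: A weight is a non-negative locally integrable function on $\mathbb{R}^n$; $L^p(w)=L^p(\mathbb{R}^n,w\,dx)$, $\sigma(Q)=\int_Q\sigma$, and $p'$ is the dual exponent. A dyadic grid $\mathscr{D}$ is a collection of cubes such that (i) each $Q\in\mathscr{D}$ has sidelength $2^k$ for some $k\in\mathbb{Z}$; (ii) $Q\cap R\in\{Q,R,\emptyset\}$ for all $Q,R\in\mathscr{D}$; (iii) for each $k$, the cubes of sidelength $2^k$ partition $\mathbb{R}^n$. The bilinear fractional maximal operator is $\mathcal{M}_\alpha(f_1,f_2)(x)=\sup_{Q\ni x}\prod_{i=1}^2\frac{1}{|Q|^{1-\alpha/(2n)}}\int_Q|f_i|$ (supremum over all cubes containing $x$), and its dyadic version $\mathcal{M}^{\mathscr{D}}_\alpha$ is defined the same way with the supremum restricted to cubes $Q\in\mathscr{D}$ containing $x$. *)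

theory Defs
  imports "HOL-Analysis.Analysis"
begin

(* Dimension n = CARD('n); points of R^n are vectors real^'n. *)

(* Real power of an extended nonnegative real, for positive exponents r:
   \<infinity>^r = \<infinity>, and x^r the usual real power for finite x (0^r = 0). *)
definition epowr :: "ennreal \<Rightarrow> real \<Rightarrow> ennreal" where
  "epowr x r = (if x = top then top else ennreal (enn2real x powr r))"

definition cube_at :: "real^'n \<Rightarrow> real \<Rightarrow> (real^'n) set" where
  "cube_at a l = {x. \<forall>i. a$i \<le> x$i \<and> x$i < a$i + l}"

definition is_cube :: "(real^'n) set \<Rightarrow> bool" where
  "is_cube Q \<longleftrightarrow> (\<exists>a l. 0 < l \<and> Q = cube_at a l)"

definition dyadic_size_cube :: "int \<Rightarrow> (real^'n) set \<Rightarrow> bool" where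
  "dyadic_size_cube k Q \<longleftrightarrow> (\<exists>a. Q = cube_at a (2 powi k))"

definition dyadic_grid :: "(real^'n) set set \<Rightarrow> bool" where
  "dyadic_grid D \<longleftrightarrow>
     (\<forall>Q\<in>D. \<exists>k::int. dyadic_size_cube k Q) \<and>
     (\<forall>Q\<in>D. \<forall>R\<in>D. Q \<inter> R = Q \<or> Q \<inter> R = R \<or> Q \<inter> R = {}) \<and>
     (\<forall>k::int. \<forall>x. \<exists>!Q. Q \<in> D \<and> dyadic_size_cube k Q \<and> x \<in> Q)"

definition weight :: "(real^'n \<Rightarrow> real) \<Rightarrow> bool" where
  "weight w \<longleftrightarrow> w \<in> borel_measurable lebesgue \<and> (\<forall>x. 0 \<le> w x) \<and>
     (\<forall>K. compact K \<longrightarrow> set_integrable lebesgue K w)"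

definition wmeas :: "(real^'n \<Rightarrow> real) \<Rightarrow> (real^'n) set \<Rightarrow> ennreal" where
  "wmeas w Q = (\<integral>\<^sup>+ x\<in>Q. ennreal (w x) \<partial>lebesgue)"

definition frac_avg :: "real \<Rightarrow> (real^'n) set \<Rightarrow> (real^'n \<Rightarrow> real) \<Rightarrow> ennreal" where
  "frac_avg \<alpha> Q f = (\<integral>\<^sup>+ x\<in>Q. ennreal \<bar>f x\<bar> \<partial>lebesgue)
      / ennreal (measure lebesgue Q powr (1 - \<alpha> / (2 * real CARD('n))))"

definition bmax_frac :: "real \<Rightarrow> (real^'n \<Rightarrow> real) \<Rightarrow> (real^'n \<Rightarrow> real) \<Rightarrow> real^'n \<Rightarrow> ennreal" where
  "bmax_frac \<alpha> f1 f2 x = (SUP Q\<in>{Q. is_cube Q \<and> x \<in> Q}. frac_avg \<alpha> Q f1 * frac_avg \<alpha> Q f2)"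

definition bmax_frac_dyadic :: "(real^'n) set set \<Rightarrow> real \<Rightarrow> (real^'n \<Rightarrow> real) \<Rightarrow> (real^'n \<Rightarrow> real) \<Rightarrow> real^'n \<Rightarrow> ennreal" where
  "bmax_frac_dyadic D \<alpha> f1 f2 x = (SUP Q\<in>{Q. Q \<in> D \<and> x \<in> Q}. frac_avg \<alpha> Q f1 * frac_avg \<alpha> Q f2)"

definition testing_const :: "real \<Rightarrow> real \<Rightarrow> real \<Rightarrow> real \<Rightarrow> (real^'n \<Rightarrow> real) \<Rightarrow> (real^'n \<Rightarrow> real)
     \<Rightarrow> (real^'n \<Rightarrow> real) \<Rightarrow> ennreal" where
  "testing_const \<alpha> p1 p2 q \<sigma>1 \<sigma>2 v =
     (SUP Q\<in>{Q. is_cube Q}.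
        epowr (\<integral>\<^sup>+ x\<in>Q. epowr (bmax_frac \<alpha> (\<lambda>y. \<sigma>1 y * indicator Q y) (\<lambda>y. \<sigma>2 y * indicator Q y) x) q
                            * ennreal (v x) \<partial>lebesgue) (1/q)
        / (epowr (wmeas \<sigma>1 Q) (1/p1) * epowr (wmeas \<sigma>2 Q) (1/p2)))"

definition wLp_norm :: "real \<Rightarrow> (real^'n \<Rightarrow> real) \<Rightarrow> (real^'n \<Rightarrow> real) \<Rightarrow> ennreal" where
  "wLp_norm p w f = epowr (\<integral>\<^sup>+ x. ennreal (\<bar>f x\<bar> powr p * w x) \<partial>lebesgue) (1/p)"

definition dual_exp :: "real \<Rightarrow> real" where
  "dual_exp p = p / (p - 1)"

end

theory Submission
  imports Defs
begin

text \<open>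
  Fix x in R and a dyadic cube Q containing x. If Q contains R, both averages only grow when Q is
  replaced by R, because both functions vanish outside R. If Q lies in R, pick k with
  2^k < avg_Q^sigma2 |f| <= 2^(k+1) and let P be the maximal dyadic cube between Q and R on which the
  sigma2-average of |f| still exceeds 2^k (a stopping cube of level k). The product of the averages
  over Q is then at most 2^(k+1) times the product of the averages of sigma1 1_P and sigma2 1_P, so
  on R the operator is dominated by sup_(k,P) 2^(k+1) M^D(sigma1 1_P, sigma2 1_P) 1_P.

  Bounding the q-th power of this supremum by the sum of the q-th powers and testing on each P gives
  the bound [w,v]^q sigma1(R)^(q/p1) Sum_(k,P) (2^((k+1) p2) sigma2(P))^(q/p2), and q >= p2 moves the
  sum inside the power q/p2. The stopping condition gives 2^(k-1) sigma2(P) <= integral of |f| sigma2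
  over P intersected with {|f| > 2^(k-1)}; the stopping cubes of one level are disjoint, so a geometric
  series in k bounds Sum_(k,P) 2^((k+1) p2) sigma2(P) by a constant times the integral of |f|^p2 sigma2.
\<close>

lemma epowr_ennreal: "0 \<le> x \<Longrightarrow> epowr (ennreal x) r = ennreal (x powr r)"
  by (simp add: epowr_def)

lemma epowr_top [simp]: "epowr top r = top"
  by (simp add: epowr_def)

lemma epowr_0 [simp]: "epowr 0 r = 0"
  by (simp add: epowr_def)

lemma epowr_1 [simp]: "epowr a 1 = a"
  by (cases a rule: ennreal_cases) (auto simp: epowr_ennreal)

lemma epowr_less_top: "a < top \<Longrightarrow> epowr a r < top"
  by (cases a rule: ennreal_cases) (auto simp: epowr_ennreal)

lemma epowr_epowr: "0 < r \<Longrightarrow> epowr (epowr a r) s = epowr a (r * s)"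
  by (cases a rule: ennreal_cases) (auto simp: epowr_ennreal powr_powr)

lemma epowr_eq_0_iff: "0 < r \<Longrightarrow> epowr a r = 0 \<longleftrightarrow> a = 0"
  by (cases a rule: ennreal_cases) (auto simp: epowr_ennreal)

lemma epowr_mono:
  assumes "a \<le> b" "0 \<le> r"
  shows "epowr a r \<le> epowr b r"
proof (cases b rule: ennreal_cases)
  case (real y)
  with assms(1) obtain x where "a = ennreal x" "0 \<le> x" "x \<le> y"
    by (cases a rule: ennreal_cases) (auto simp: top_unique)
  with real assms(2) show ?thesis
    by (simp add: epowr_ennreal powr_mono2)
qed simp

lemma epowr_mult:
  assumes "0 < r"
  shows "epowr (a * b) r = epowr a r * epowr b r"
proof (cases "a = 0 \<or> b = 0")
  case False
  then have "epowr a r \<noteq> 0" "epowr b r \<noteq> 0"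
    using assms by (auto simp: epowr_eq_0_iff)
  with False show ?thesis
    by (cases a b rule: ennreal2_cases)
       (auto simp: epowr_ennreal ennreal_mult''[symmetric] powr_mult ennreal_mult_top ennreal_top_mult)
qed auto

lemma epowr_indicator: "0 < r \<Longrightarrow> epowr (indicator A x) r = indicator A x"
  by (auto simp: indicator_def epowr_ennreal[of 1, simplified])

lemma borel_measurable_epowr [measurable]:
  assumes f [measurable]: "f \<in> borel_measurable M"
  shows "(\<lambda>x. epowr (f x) r) \<in> borel_measurable M"
proof -
  have [measurable]: "{x \<in> space M. f x = top} \<in> sets M"
    using measurable_equality_set[OF f, of "\<lambda>_. top"] by simp
  show ?thesis
    unfolding epowr_def by measurable
qed

lemma divide_ennreal_antimono:
  assumes "0 \<le> b" "b \<le> a"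
  shows "x / ennreal a \<le> x / ennreal b"
proof (cases "b = 0")
  case True
  then show ?thesis
    by (cases "x = 0") (auto simp: divide_ennreal_def ennreal_mult_top)
next
  case False
  with assms have "inverse (ennreal a) \<le> inverse (ennreal b)"
    by (simp add: inverse_ennreal ennreal_leI le_imp_inverse_le)
  then show ?thesis
    unfolding divide_ennreal_def by (rule mult_left_mono) simp
qed

lemma ennreal_le_mult_if_divide_le:
  fixes a b c :: ennreal
  assumes "b \<noteq> 0" "b < top" "a / b \<le> c"
  shows "a \<le> c * b"
proof -
  have "a = a / b * b"
    using assms by (simp add: ennreal_divide_times)
  also have "\<dots> \<le> c * b"
    using assms(3) by (rule mult_right_mono) simp
  finally show ?thesis .
qed

lemma nn_integral_count_space_ge_point:
  fixes g :: "'i \<Rightarrow> ennreal"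
  assumes "i \<in> I"
  shows "g i \<le> (\<integral>\<^sup>+j. g j \<partial>count_space I)"
proof -
  have "g i = (\<integral>\<^sup>+j. g i * indicator {i} j \<partial>count_space I)"
    using assms by (subst nn_integral_cmult_indicator) auto
  also have "\<dots> \<le> (\<integral>\<^sup>+j. g j \<partial>count_space I)"
    by (intro nn_integral_mono) (auto simp: indicator_def)
  finally show ?thesis .
qed

lemma nn_integral_count_space_mono_set:
  fixes g :: "'i \<Rightarrow> ennreal"
  assumes "A \<subseteq> B"
  shows "(\<integral>\<^sup>+j. g j \<partial>count_space A) \<le> (\<integral>\<^sup>+j. g j \<partial>count_space B)"
  using assms by (auto simp: nn_integral_count_space_indicator indicator_def intro!: nn_integral_mono)

lemma nn_integral_count_space_indicator_at:
  fixes g :: "'i \<Rightarrow> ennreal"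
  shows "(\<integral>\<^sup>+j. g j * indicator (P j) x \<partial>count_space A) = (\<integral>\<^sup>+j. g j \<partial>count_space {j\<in>A. x \<in> P j})"
  by (auto simp: nn_integral_count_space_indicator indicator_def intro!: nn_integral_cong)

lemma epowr_SUP_le_nn_integral_count_space:
  fixes b :: "'i \<Rightarrow> ennreal"
  assumes q: "0 < q"
  shows "epowr (SUP i\<in>I. b i) q \<le> (\<integral>\<^sup>+i. epowr (b i) q \<partial>count_space I)"
    (is "_ \<le> ?S")
proof -
  have "b i \<le> epowr ?S (1/q)" if "i \<in> I" for i
  proof -
    have "epowr (epowr (b i) q) (1/q) \<le> epowr ?S (1/q)"
      using q that by (intro epowr_mono nn_integral_count_space_ge_point) auto
    with q show ?thesis
      by (simp add: epowr_epowr)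
  qed
  then have "epowr (SUP i\<in>I. b i) q \<le> epowr (epowr ?S (1/q)) q"
    using q by (intro epowr_mono SUP_least) auto
  with q show ?thesis
    by (simp add: epowr_epowr)
qed

text \<open>Each term is at most \<open>a\<^sub>i S\<^sup>r\<^sup>-\<^sup>1\<close>, where \<open>S\<close> is the whole sum.\<close>
lemma nn_integral_count_space_epowr_le:
  fixes a :: "'i \<Rightarrow> ennreal"
  assumes r: "1 \<le> r"
  shows "(\<integral>\<^sup>+i. epowr (a i) r \<partial>count_space I) \<le> epowr (\<integral>\<^sup>+i. a i \<partial>count_space I) r"
proof (cases "(\<integral>\<^sup>+i. a i \<partial>count_space I) = top")
  case False
  then obtain s where s: "(\<integral>\<^sup>+i. a i \<partial>count_space I) = ennreal s" "0 \<le> s"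
    by (cases "\<integral>\<^sup>+i. a i \<partial>count_space I" rule: ennreal_cases) auto
  have "epowr (a i) r \<le> a i * ennreal (s powr (r - 1))" if "i \<in> I" for i
  proof -
    have "a i \<le> ennreal s"
      using nn_integral_count_space_ge_point[OF that, of a] s by simp
    then obtain y where y: "a i = ennreal y" "0 \<le> y" "y \<le> s"
      using s(2) by (cases "a i" rule: ennreal_cases) (auto simp: top_unique)
    have "y powr r = y * y powr (r - 1)"
      using y by (simp add: powr_mult_base)
    also have "\<dots> \<le> y * s powr (r - 1)"
      using y r by (intro mult_left_mono powr_mono2) auto
    finally show ?thesis
      using y by (simp add: epowr_ennreal ennreal_mult'[symmetric] ennreal_leI)
  qed
  then have "(\<integral>\<^sup>+i. epowr (a i) r \<partial>count_space I) \<le> (\<integral>\<^sup>+i. a i * ennreal (s powr (r - 1)) \<partial>count_space I)"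
    by (intro nn_integral_mono) auto
  also have "\<dots> = ennreal s * ennreal (s powr (r - 1))"
    by (simp add: nn_integral_multc s)
  also have "\<dots> = epowr (\<integral>\<^sup>+i. a i \<partial>count_space I) r"
    using s by (simp add: epowr_ennreal ennreal_mult'[symmetric] powr_mult_base)
  finally show ?thesis .
qed simp

lemma ennreal_eq_top_if_dyadic_multiples_le:
  fixes c \<Phi> :: ennreal
  assumes c: "0 < c" and le: "\<And>k::int. ennreal (2 powr real_of_int k) * c \<le> \<Phi>"
  shows "\<Phi> = top"
proof (rule ccontr)
  assume "\<Phi> \<noteq> top"
  then obtain \<phi> where \<phi>: "\<Phi> = ennreal \<phi>" "0 \<le> \<phi>"
    by (cases \<Phi> rule: ennreal_cases) auto
  from le[of 0] have "c \<le> \<Phi>" by simp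
  with c \<phi> obtain \<gamma> where \<gamma>: "c = ennreal \<gamma>" "0 < \<gamma>"
    by (cases c rule: ennreal_cases) (auto simp: top_unique)
  obtain n :: nat where "\<phi> / \<gamma> < 2 ^ n"
    using real_arch_pow[of 2] by auto
  then have "\<phi> < 2 powr real_of_int (int n) * \<gamma>"
    using \<gamma> by (simp add: powr_realpow field_simps)
  moreover have "2 powr real_of_int (int n) * \<gamma> \<le> \<phi>"
    using le[of "int n"] \<gamma> \<phi> by (simp add: ennreal_mult''[symmetric])
  ultimately show False by simp
qed

lemma exists_dyadic_level:
  fixes g w :: real
  assumes "0 < g" "0 < w"
  shows "\<exists>k::int. 2 powr real_of_int k * w < g \<and> g \<le> 2 powr real_of_int (k + 1) * w"
proof
  define k where "k = \<lceil>log 2 (g / w)\<rceil> - 1"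
  have "real_of_int k < log 2 (g / w)" "log 2 (g / w) \<le> real_of_int (k + 1)"
    unfolding k_def by linarith+
  then have "2 powr real_of_int k < g / w" "g / w \<le> 2 powr real_of_int (k + 1)"
    using assms by (simp_all add: less_log_iff log_le_iff)
  then show "2 powr real_of_int k * w < g \<and> g \<le> 2 powr real_of_int (k + 1) * w"
    using assms by (simp add: field_simps)
qed

lemma nn_integral_powr_two_atMost_int:
  assumes a: "0 < a"
  shows "(\<integral>\<^sup>+k. ennreal (2 powr (real_of_int k * a)) \<partial>count_space {..K})
           = ennreal (2 powr (real_of_int K * a) / (1 - 2 powr (- a)))"
proof -
  define \<rho> :: real where "\<rho> = 2 powr (- a)"
  have \<rho>: "0 < \<rho>" "\<rho> < 1"
    using a by (auto simp: \<rho>_def powr_less_one)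
  have terms: "2 powr (real_of_int (K - int m) * a) = 2 powr (real_of_int K * a) * \<rho> ^ m" for m
    by (simp add: \<rho>_def powr_realpow[symmetric] powr_powr powr_add[symmetric] algebra_simps)
  have "bij_betw (\<lambda>m. K - int m) UNIV {..K}"
    by (rule bij_betwI[where g = "\<lambda>k. nat (K - k)"]) auto
  then have "(\<integral>\<^sup>+k. ennreal (2 powr (real_of_int k * a)) \<partial>count_space {..K})
      = (\<integral>\<^sup>+m. ennreal (2 powr (real_of_int (K - int m) * a)) \<partial>count_space UNIV)"
    by (rule nn_integral_bij_count_space[symmetric])
  also have "\<dots> = (\<Sum>m. ennreal (2 powr (real_of_int K * a) * \<rho> ^ m))"
    by (simp only: nn_integral_count_space_nat terms)
  also have "\<dots> = ennreal (2 powr (real_of_int K * a) * (1 / (1 - \<rho>)))"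
    using \<rho> by (intro suminf_ennreal_eq sums_mult geometric_sums) auto
  finally show ?thesis
    by (simp add: \<rho>_def)
qed

definition level_sum_const :: "real \<Rightarrow> real" where
  "level_sum_const p = 2 powr (p - 1) / (1 - 2 powr (1 - p))"

lemma level_sum_const_pos: "1 < p \<Longrightarrow> 0 < level_sum_const p"
  by (simp add: level_sum_const_def powr_less_one)

lemma nn_integral_dyadic_levels_below:
  fixes p g :: real
  assumes p: "1 < p" and g: "0 \<le> g"
  shows "(\<integral>\<^sup>+k. ennreal (2 powr (real_of_int k * (p - 1))) * indicator {k. 2 powr (real_of_int k - 1) < g} k
            \<partial>count_space UNIV)
         \<le> ennreal (level_sum_const p * g powr (p - 1))"
proof (cases "g = 0")
  case False
  define K where "K = \<lceil>log 2 g\<rceil>"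
  have "k \<le> K" if "2 powr (real_of_int k - 1) < g" for k
  proof -
    have "real_of_int (k - 1) < log 2 g"
      using that g False by (simp add: less_log_iff)
    then show ?thesis
      unfolding K_def less_ceiling_iff[symmetric] by simp
  qed
  then have "(\<integral>\<^sup>+k. ennreal (2 powr (real_of_int k * (p - 1))) * indicator {k. 2 powr (real_of_int k - 1) < g} k
               \<partial>count_space UNIV)
      \<le> (\<integral>\<^sup>+k. ennreal (2 powr (real_of_int k * (p - 1))) \<partial>count_space {..K})"
    by (auto simp: nn_integral_count_space_indicator indicator_def intro!: nn_integral_mono)
  also have "\<dots> = ennreal (2 powr (real_of_int K * (p - 1)) / (1 - 2 powr (1 - p)))"
    using p by (simp add: nn_integral_powr_two_atMost_int)
  also have "\<dots> \<le> ennreal (level_sum_const p * g powr (p - 1))"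
  proof (rule ennreal_leI)
    have "2 powr (real_of_int K * (p - 1)) \<le> 2 powr ((log 2 g + 1) * (p - 1))"
      using p by (intro powr_mono mult_right_mono) (auto simp: K_def)
    also have "\<dots> = g powr (p - 1) * 2 powr (p - 1)"
      using g False by (simp add: distrib_right powr_add powr_powr[symmetric])
    finally have "2 powr (real_of_int K * (p - 1)) \<le> g powr (p - 1) * 2 powr (p - 1)" .
    moreover have "0 < 1 - 2 powr (1 - p)"
      using p by (simp add: powr_less_one)
    ultimately show "2 powr (real_of_int K * (p - 1)) / (1 - 2 powr (1 - p)) \<le> level_sum_const p * g powr (p - 1)"
      by (simp add: level_sum_const_def divide_right_mono mult.commute)
  qed
  finally show ?thesis .
qed simp

section \<open>Cubes and dyadic grids\<close>

lemma cube_at_corner: "0 < l \<Longrightarrow> a \<in> cube_at a l"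
  by (simp add: cube_at_def)

lemma cube_at_side_le:
  assumes l: "0 < l" and sub: "cube_at a l \<subseteq> cube_at b m"
  shows "l \<le> m"
proof (rule ccontr)
  assume "\<not> l \<le> m"
  define t where "t = (max m 0 + l) / 2"
  have t: "0 < t" "t < l" "m < t"
    using \<open>\<not> l \<le> m\<close> l by (auto simp: t_def)
  then have "(\<chi> i. a$i + t) \<in> cube_at a l"
    by (simp add: cube_at_def)
  with sub cube_at_corner[OF l] have "(\<chi> i. a$i + t) \<in> cube_at b m" "a \<in> cube_at b m"
    by auto
  then have "a$i + t < b$i + m" "b$i \<le> a$i" for i
    by (auto simp: cube_at_def)
  from this(1)[of undefined] this(2)[of undefined] t show False
    by linarith
qed

lemma cube_at_subset_cbox: "cube_at a l \<subseteq> cbox a (\<chi> i. a$i + l)"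
  by (auto simp: cube_at_def mem_box_cart less_imp_le)

lemma sets_lebesgue_cube_at [measurable]: "cube_at a l \<in> sets lebesgue"
proof -
  have "cube_at a l \<in> sets lborel"
    unfolding cube_at_def by measurable
  then show ?thesis
    by (metis sets_completionI_sets sets_lborel)
qed

lemma lmeasurable_cube_at: "cube_at a l \<in> lmeasurable"
  by (rule fmeasurableI2[OF lmeasurable_cbox cube_at_subset_cbox sets_lebesgue_cube_at])

lemma interior_cube_at_nonempty:
  assumes "0 < l"
  shows "interior (cube_at a l) \<noteq> {}"
proof -
  have "box a (\<chi> i. a$i + l) \<subseteq> interior (cube_at a l)"
    by (intro interior_maximal open_box) (auto simp: cube_at_def mem_box_cart intro: less_imp_le)
  moreover have "(\<chi> i. a$i + l/2) \<in> box a (\<chi> i. a$i + l)"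
    using assms by (simp add: mem_box_cart)
  ultimately show ?thesis by blast
qed

lemma wmeas_cube_at_finite:
  assumes "weight w"
  shows "wmeas w (cube_at a l) < \<infinity>"
proof -
  define K where "K = cbox a (\<chi> i. a$i + l)"
  have "set_integrable lebesgue K w" "\<And>x. 0 \<le> w x"
    using assms by (auto simp: weight_def K_def)
  then have "(\<integral>\<^sup>+x. ennreal (w x * indicator K x) \<partial>lebesgue) < \<infinity>"
    by (simp add: set_integrable_def integrable_iff_bounded mult.commute)
  moreover have "wmeas w (cube_at a l) \<le> (\<integral>\<^sup>+x. ennreal (w x * indicator K x) \<partial>lebesgue)"
    unfolding wmeas_def K_def using cube_at_subset_cbox[of a l]
    by (intro nn_integral_mono) (auto simp: indicator_def)
  ultimately show ?thesis by simp
qed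

definition dyadic_level :: "(real^'n) set \<Rightarrow> int" where
  "dyadic_level Q = (SOME k. dyadic_size_cube k Q)"

lemma dyadic_size_cube_level_le:
  assumes "dyadic_size_cube k Q" "dyadic_size_cube j P" "Q \<subseteq> P"
  shows "k \<le> j"
proof -
  obtain a b where "Q = cube_at a (2 powi k)" "P = cube_at b (2 powi j)"
    using assms(1,2) by (auto simp: dyadic_size_cube_def)
  with assms(3) have "(2::real) powi k \<le> 2 powi j"
    by (intro cube_at_side_le) auto
  then show ?thesis
    using power_int_strict_increasing[of j k "2::real"] by fastforce
qed

context
  fixes D :: "(real^'n) set set"
  assumes D: "dyadic_grid D"
begin

lemma dyadic_grid_size_cube:
  assumes "Q \<in> D"
  shows "dyadic_size_cube (dyadic_level Q) Q"
proof -
  have "\<forall>Q\<in>D. \<exists>k. dyadic_size_cube k Q"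
    using D unfolding dyadic_grid_def by (rule conjunct1)
  with assms obtain k where "dyadic_size_cube k Q" by blast
  then show ?thesis
    unfolding dyadic_level_def by (rule someI)
qed

lemma dyadic_grid_cube_at:
  assumes "Q \<in> D"
  obtains a where "Q = cube_at a (2 powi dyadic_level Q)"
  using dyadic_grid_size_cube[OF assms] by (auto simp: dyadic_size_cube_def)

lemma dyadic_grid_is_cube: "Q \<in> D \<Longrightarrow> is_cube Q"
  by (metis dyadic_grid_cube_at is_cube_def zero_less_power_int zero_less_numeral)

lemma dyadic_grid_lmeasurable: "Q \<in> D \<Longrightarrow> Q \<in> lmeasurable"
  by (metis dyadic_grid_cube_at lmeasurable_cube_at)

lemma dyadic_grid_sets: "Q \<in> D \<Longrightarrow> Q \<in> sets lebesgue"
  by (metis dyadic_grid_cube_at sets_lebesgue_cube_at)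

lemma dyadic_grid_interior_nonempty: "Q \<in> D \<Longrightarrow> interior Q \<noteq> {}"
  by (metis dyadic_grid_cube_at interior_cube_at_nonempty zero_less_power_int zero_less_numeral)

lemma dyadic_grid_wmeas_finite: "weight w \<Longrightarrow> Q \<in> D \<Longrightarrow> wmeas w Q < \<infinity>"
  by (metis dyadic_grid_cube_at wmeas_cube_at_finite)

lemma dyadic_grid_nested:
  assumes "Q \<in> D" "P \<in> D" "x \<in> Q" "x \<in> P"
  shows "Q \<subseteq> P \<or> P \<subseteq> Q"
proof -
  have "\<forall>Q\<in>D. \<forall>R\<in>D. Q \<inter> R = Q \<or> Q \<inter> R = R \<or> Q \<inter> R = {}"
    using D unfolding dyadic_grid_def by (rule conjunct1[OF conjunct2])
  with assms show ?thesis by blast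
qed

lemma dyadic_grid_level_eq:
  assumes "Q \<in> D" "P \<in> D" "dyadic_level Q = dyadic_level P" "x \<in> Q" "x \<in> P"
  shows "Q = P"
proof -
  have "\<forall>k::int. \<forall>x. \<exists>!Q. Q \<in> D \<and> dyadic_size_cube k Q \<and> x \<in> Q"
    using D unfolding dyadic_grid_def by (rule conjunct2[OF conjunct2])
  then have "\<exists>!Q. Q \<in> D \<and> dyadic_size_cube (dyadic_level P) Q \<and> x \<in> Q"
    by blast
  then show ?thesis
    using assms dyadic_grid_size_cube[OF assms(1)] dyadic_grid_size_cube[OF assms(2)] by metis
qed

lemma dyadic_grid_level_mono: "Q \<in> D \<Longrightarrow> P \<in> D \<Longrightarrow> Q \<subseteq> P \<Longrightarrow> dyadic_level Q \<le> dyadic_level P"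
  by (rule dyadic_size_cube_level_le[OF dyadic_grid_size_cube dyadic_grid_size_cube])

lemma countable_dyadic_grid: "countable D"
proof -
  have "countable {Q\<in>D. dyadic_level Q = k}" for k
  proof (rule countable_disjoint_nonempty_interior_subsets)
    show "pairwise disjnt {Q\<in>D. dyadic_level Q = k}"
      unfolding pairwise_def disjnt_def
    proof (intro ballI impI equals0I)
      fix Q P x
      assume "Q \<in> {Q\<in>D. dyadic_level Q = k}" "P \<in> {Q\<in>D. dyadic_level Q = k}" "Q \<noteq> P" "x \<in> Q \<inter> P"
      then show False
        using dyadic_grid_level_eq[of Q P x] by auto
    qed
  qed (use dyadic_grid_interior_nonempty in blast)
  then have "countable (\<Union>k. {Q\<in>D. dyadic_level Q = k})"
    by (intro countable_UN) auto
  moreover have "D = (\<Union>k. {Q\<in>D. dyadic_level Q = k})"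
    by auto
  ultimately show ?thesis by simp
qed

lemma finite_dyadic_grid_between:
  assumes "Q \<in> D" "R \<in> D"
  shows "finite {P\<in>D. Q \<subseteq> P \<and> P \<subseteq> R}" (is "finite ?A")
proof -
  obtain x where x: "x \<in> Q"
    using dyadic_grid_interior_nonempty[OF assms(1)] interior_subset by blast
  have "inj_on dyadic_level ?A"
  proof (rule inj_onI)
    fix P P' assume "P \<in> ?A" "P' \<in> ?A" "dyadic_level P = dyadic_level P'"
    with x show "P = P'"
      using dyadic_grid_level_eq[of P P' x] by blast
  qed
  moreover have "dyadic_level ` ?A \<subseteq> {dyadic_level Q..dyadic_level R}"
  proof
    fix k assume "k \<in> dyadic_level ` ?A"
    then obtain P where "P \<in> ?A" "k = dyadic_level P" by blast
    with assms show "k \<in> {dyadic_level Q..dyadic_level R}"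
      using dyadic_grid_level_mono[of Q P] dyadic_grid_level_mono[of P R] by auto
  qed
  ultimately show ?thesis
    by (meson finite_atLeastAtMost_int finite_imageD finite_subset)
qed

end

lemma frac_avg_cong:
  assumes "\<And>y. y \<in> Q \<Longrightarrow> \<bar>g y\<bar> = \<bar>h y\<bar>"
  shows "frac_avg \<alpha> Q g = frac_avg \<alpha> Q h"
proof -
  have "(\<integral>\<^sup>+y\<in>Q. ennreal \<bar>g y\<bar> \<partial>lebesgue) = (\<integral>\<^sup>+y\<in>Q. ennreal \<bar>h y\<bar> \<partial>lebesgue)"
    using assms by (intro nn_integral_cong) (simp add: indicator_def)
  then show ?thesis
    unfolding frac_avg_def by simp
qed

lemma frac_avg_eq_0_iff: "frac_avg \<alpha> Q h = 0 \<longleftrightarrow> (\<integral>\<^sup>+y\<in>Q. ennreal \<bar>h y\<bar> \<partial>lebesgue) = 0"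
  by (simp add: frac_avg_def)

lemma frac_avg_le_mult:
  assumes "(\<integral>\<^sup>+y\<in>Q. ennreal \<bar>g y\<bar> \<partial>lebesgue) \<le> c * (\<integral>\<^sup>+y\<in>Q. ennreal \<bar>h y\<bar> \<partial>lebesgue)"
  shows "frac_avg \<alpha> Q g \<le> c * frac_avg \<alpha> Q h"
  unfolding frac_avg_def ennreal_times_divide using assms by (rule divide_right_mono_ennreal)

lemma frac_avg_superset_le:
  fixes Q R :: "(real^'n) set"
  assumes "R \<in> sets lebesgue" "Q \<in> lmeasurable" "R \<subseteq> Q" "\<alpha> \<le> 2 * real CARD('n)"
    and "\<And>y. y \<notin> R \<Longrightarrow> h y = 0"
  shows "frac_avg \<alpha> Q h \<le> frac_avg \<alpha> R h"
proof -
  have "(\<integral>\<^sup>+y\<in>Q. ennreal \<bar>h y\<bar> \<partial>lebesgue) = (\<integral>\<^sup>+y\<in>R. ennreal \<bar>h y\<bar> \<partial>lebesgue)"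
    using assms(3,5) by (intro nn_integral_cong) (auto simp: indicator_def)
  moreover have "measure lebesgue R \<le> measure lebesgue Q"
    using assms(3,1,2) by (rule measure_mono_fmeasurable)
  then have "measure lebesgue R powr (1 - \<alpha> / (2 * real CARD('n)))
      \<le> measure lebesgue Q powr (1 - \<alpha> / (2 * real CARD('n)))"
    using assms(4) by (intro powr_mono2) (auto simp: divide_le_eq_1)
  ultimately show ?thesis
    unfolding frac_avg_def by (auto intro: divide_ennreal_antimono)
qed

lemma frac_avg_eq_0_if_wmeas_eq_0:
  assumes "\<And>y. 0 \<le> s y" "wmeas s P = 0"
  shows "frac_avg \<alpha> Q (\<lambda>y. s y * indicator P y) = 0"
proof -
  have "(\<integral>\<^sup>+y\<in>Q. ennreal \<bar>s y * indicator P y\<bar> \<partial>lebesgue) \<le> wmeas s P"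
    unfolding wmeas_def using assms(1) by (intro nn_integral_mono) (auto simp: indicator_def)
  with assms(2) show ?thesis
    unfolding frac_avg_def by simp
qed

lemma frac_avg_le_bmax_frac_dyadic:
  "Q \<in> D \<Longrightarrow> x \<in> Q \<Longrightarrow> frac_avg \<alpha> Q f1 * frac_avg \<alpha> Q f2 \<le> bmax_frac_dyadic D \<alpha> f1 f2 x"
  unfolding bmax_frac_dyadic_def by (intro SUP_upper) auto

lemma bmax_frac_dyadic_le_bmax_frac:
  "(\<And>Q. Q \<in> D \<Longrightarrow> is_cube Q) \<Longrightarrow> bmax_frac_dyadic D \<alpha> f1 f2 x \<le> bmax_frac \<alpha> f1 f2 x"
  unfolding bmax_frac_dyadic_def bmax_frac_def by (rule SUP_subset_mono) auto

lemma borel_measurable_bmax_frac_dyadic: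
  assumes "countable D" "\<And>Q. Q \<in> D \<Longrightarrow> Q \<in> sets lebesgue"
  shows "bmax_frac_dyadic D \<alpha> f1 f2 \<in> borel_measurable lebesgue"
proof -
  have "bmax_frac_dyadic D \<alpha> f1 f2 = (\<lambda>x. SUP Q\<in>D. frac_avg \<alpha> Q f1 * frac_avg \<alpha> Q f2 * indicator Q x)"
    unfolding bmax_frac_dyadic_def
    by (intro ext antisym SUP_least) (auto intro: SUP_upper2 simp: indicator_def)
  with assms show ?thesis
    by (auto intro: borel_measurable_SUP)
qed

lemma bmax_frac_testing_bound:
  fixes \<sigma>1 \<sigma>2 v :: "real^'n \<Rightarrow> real"
  assumes P: "is_cube P" and exps: "0 < q" "0 < p1" "0 < p2"
    and nonneg: "\<And>y. 0 \<le> \<sigma>1 y" "\<And>y. 0 \<le> \<sigma>2 y"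
    and finite: "wmeas \<sigma>1 P < \<infinity>" "wmeas \<sigma>2 P < \<infinity>"
  shows "(\<integral>\<^sup>+x\<in>P. epowr (bmax_frac \<alpha> (\<lambda>y. \<sigma>1 y * indicator P y) (\<lambda>y. \<sigma>2 y * indicator P y) x) q
                    * ennreal (v x) \<partial>lebesgue)
         \<le> epowr (testing_const \<alpha> p1 p2 q \<sigma>1 \<sigma>2 v) q
             * epowr (wmeas \<sigma>1 P) (q / p1) * epowr (wmeas \<sigma>2 P) (q / p2)"
    (is "?N \<le> epowr ?T q * _ * _")
proof (cases "wmeas \<sigma>1 P = 0 \<or> wmeas \<sigma>2 P = 0")
  case True
  then have zero: "frac_avg \<alpha> Q (\<lambda>y. \<sigma>1 y * indicator P y) * frac_avg \<alpha> Q (\<lambda>y. \<sigma>2 y * indicator P y) = 0" for Q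
    using frac_avg_eq_0_if_wmeas_eq_0[of \<sigma>1 P] frac_avg_eq_0_if_wmeas_eq_0[of \<sigma>2 P] nonneg by auto
  have "bmax_frac \<alpha> (\<lambda>y. \<sigma>1 y * indicator P y) (\<lambda>y. \<sigma>2 y * indicator P y) x = 0" for x
    unfolding bmax_frac_def zero by (intro antisym SUP_least) auto
  with exps(1) show ?thesis
    by simp
next
  case False
  define Den where "Den = epowr (wmeas \<sigma>1 P) (1/p1) * epowr (wmeas \<sigma>2 P) (1/p2)"
  have "epowr ?N (1/q) / Den \<le> ?T"
    unfolding testing_const_def Den_def using P by (intro SUP_upper2[of P]) auto
  then have "epowr ?N (1/q) \<le> ?T * Den"
    using False finite exps unfolding Den_def
    by (intro ennreal_le_mult_if_divide_le) (auto simp: epowr_eq_0_iff epowr_less_top ennreal_mult_less_top)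
  then have "epowr (epowr ?N (1/q)) q \<le> epowr (?T * Den) q"
    using exps by (intro epowr_mono) auto
  also have "\<dots> = epowr ?T q * epowr (wmeas \<sigma>1 P) (q / p1) * epowr (wmeas \<sigma>2 P) (q / p2)"
    unfolding Den_def using exps by (simp add: epowr_mult epowr_epowr mult.assoc)
  finally show ?thesis
    using exps by (simp add: epowr_epowr)
qed

section \<open>Stopping cubes\<close>

locale dyadic_testing_setup =
  fixes \<alpha> q p1 p2 :: real
    and \<sigma>1 \<sigma>2 v f :: "real^'n \<Rightarrow> real"
    and D :: "(real^'n) set set" and R :: "(real^'n) set"
  assumes alpha: "\<alpha> \<le> 2 * real CARD('n)"
    and p1: "0 < p1" and p2: "1 < p2" and p2_le_q: "p2 \<le> q"
    and weight_\<sigma>1: "weight \<sigma>1" and weight_\<sigma>2: "weight \<sigma>2" and weight_v: "weight v"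
    and grid: "dyadic_grid D" and R_in_grid: "R \<in> D"
    and f_measurable [measurable]: "f \<in> borel_measurable lebesgue"
    and f_outside: "\<And>x. x \<notin> R \<Longrightarrow> f x = 0"
begin

lemma \<sigma>2_measurable [measurable]: "\<sigma>2 \<in> borel_measurable lebesgue"
  and v_measurable [measurable]: "v \<in> borel_measurable lebesgue"
  and \<sigma>1_nonneg: "0 \<le> \<sigma>1 x" and \<sigma>2_nonneg: "0 \<le> \<sigma>2 x"
  using weight_\<sigma>1 weight_\<sigma>2 weight_v by (auto simp: weight_def)

lemma q_pos: "0 < q"
  using p2 p2_le_q by simp

definition f_mass :: "(real^'n) set \<Rightarrow> ennreal" where
  "f_mass Q = (\<integral>\<^sup>+y\<in>Q. ennreal \<bar>f y * \<sigma>2 y\<bar> \<partial>lebesgue)"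

definition above_level :: "int \<Rightarrow> (real^'n) set \<Rightarrow> bool" where
  "above_level k Q \<longleftrightarrow> ennreal (2 powr real_of_int k) * wmeas \<sigma>2 Q < f_mass Q"

definition stopping_cubes :: "int \<Rightarrow> (real^'n) set set" where
  "stopping_cubes k = {P \<in> D. P \<subseteq> R \<and> above_level k P \<and>
     (\<forall>P'\<in>D. P \<subseteq> P' \<and> P' \<subseteq> R \<and> above_level k P' \<longrightarrow> P' = P)}"

definition stopping_pairs :: "(int \<times> (real^'n) set) set" where
  "stopping_pairs = (SIGMA k:UNIV. stopping_cubes k)"

definition local_max :: "(real^'n) set \<Rightarrow> real^'n \<Rightarrow> ennreal" where
  "local_max P = bmax_frac_dyadic D \<alpha> (\<lambda>y. \<sigma>1 y * indicator P y) (\<lambda>y. \<sigma>2 y * indicator P y)"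

definition stopping_majorant :: "real^'n \<Rightarrow> ennreal" where
  "stopping_majorant x =
     (SUP (k, P)\<in>stopping_pairs. ennreal (2 powr real_of_int (k + 1)) * local_max P x * indicator P x)"

lemma stopping_cubes_in_grid: "P \<in> stopping_cubes k \<Longrightarrow> P \<in> D"
  and stopping_cubes_subset: "P \<in> stopping_cubes k \<Longrightarrow> P \<subseteq> R"
  and stopping_cubes_above_level: "P \<in> stopping_cubes k \<Longrightarrow> above_level k P"
  by (auto simp: stopping_cubes_def)

lemma stopping_cubes_sets: "P \<in> stopping_cubes k \<Longrightarrow> P \<in> sets lebesgue"
  using dyadic_grid_sets[OF grid] stopping_cubes_in_grid by blast

lemma exists_stopping_cube:
  assumes Q: "Q \<in> D" "Q \<subseteq> R" "above_level k Q"
  obtains P where "P \<in> stopping_cubes k" "Q \<subseteq> P"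
proof -
  define A where "A = {P\<in>D. Q \<subseteq> P \<and> P \<subseteq> R \<and> above_level k P}"
  have "finite A"
    using finite_dyadic_grid_between[OF grid Q(1) R_in_grid] by (rule finite_subset[rotated]) (auto simp: A_def)
  moreover have "Q \<in> A"
    using Q by (simp add: A_def)
  ultimately obtain P where P: "P \<in> A" "\<And>P'. P' \<in> A \<Longrightarrow> P \<subseteq> P' \<Longrightarrow> P = P'"
    using finite_has_maximal[of A] by blast
  then have "P \<in> stopping_cubes k" "Q \<subseteq> P"
    by (auto simp: A_def stopping_cubes_def)
  with that show ?thesis .
qed

lemma stopping_cubes_disjoint:
  assumes "P \<in> stopping_cubes k" "P' \<in> stopping_cubes k" "x \<in> P" "x \<in> P'"
  shows "P = P'"
  using dyadic_grid_nested[OF grid, of P P' x] assms by (auto simp: stopping_cubes_def)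

lemma countable_stopping_pairs: "countable stopping_pairs"
proof (rule countable_subset)
  show "stopping_pairs \<subseteq> UNIV \<times> D"
    by (auto simp: stopping_pairs_def stopping_cubes_in_grid)
  show "countable ((UNIV :: int set) \<times> D)"
    using countable_dyadic_grid[OF grid] by simp
qed

lemma f_mass_eq_0_if_wmeas_eq_0:
  assumes "Q \<in> sets lebesgue" "wmeas \<sigma>2 Q = 0"
  shows "f_mass Q = 0"
proof -
  have "AE y in lebesgue. ennreal (\<sigma>2 y) * indicator Q y = 0"
    using assms unfolding wmeas_def by (subst nn_integral_0_iff_AE[symmetric]) auto
  then have "AE y in lebesgue. ennreal \<bar>f y * \<sigma>2 y\<bar> * indicator Q y = 0"
    by eventually_elim (use \<sigma>2_nonneg in \<open>auto simp: indicator_def\<close>)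
  with assms(1) show ?thesis
    unfolding f_mass_def by (subst nn_integral_0_iff_AE) auto
qed

lemma frac_avg_le_stopping_majorant:
  assumes Q: "Q \<in> D" "Q \<subseteq> R" "x \<in> Q" and above: "above_level k Q"
  shows "ennreal (2 powr real_of_int (k + 1)) * (frac_avg \<alpha> Q (\<lambda>y. indicator R y * \<sigma>1 y) * frac_avg \<alpha> Q \<sigma>2)
           \<le> stopping_majorant x"
proof -
  obtain P where P: "P \<in> stopping_cubes k" "Q \<subseteq> P"
    using exists_stopping_cube[OF Q(1,2) above] .
  have "frac_avg \<alpha> Q (\<lambda>y. indicator R y * \<sigma>1 y) * frac_avg \<alpha> Q \<sigma>2
      = frac_avg \<alpha> Q (\<lambda>y. \<sigma>1 y * indicator P y) * frac_avg \<alpha> Q (\<lambda>y. \<sigma>2 y * indicator P y)"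
    using P(2) stopping_cubes_subset[OF P(1)]
    by (intro arg_cong2[where f = "(*)"] frac_avg_cong) (auto simp: indicator_def)
  also have "\<dots> \<le> local_max P x"
    unfolding local_max_def using Q(1,3) by (rule frac_avg_le_bmax_frac_dyadic)
  finally have "ennreal (2 powr real_of_int (k + 1)) * (frac_avg \<alpha> Q (\<lambda>y. indicator R y * \<sigma>1 y) * frac_avg \<alpha> Q \<sigma>2)
      \<le> ennreal (2 powr real_of_int (k + 1)) * local_max P x * indicator P x"
    using P(2) Q(3) by (auto simp: mult.assoc intro!: mult_left_mono)
  also have "\<dots> \<le> stopping_majorant x"
    unfolding stopping_majorant_def using P(1) by (intro SUP_upper2[of "(k, P)"]) (auto simp: stopping_pairs_def)
  finally show ?thesis .
qed

lemma exists_level_of_f_mass: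
  assumes Q: "Q \<in> D" and mass: "0 < f_mass Q" "f_mass Q < \<infinity>"
  obtains k where "above_level k Q" "f_mass Q \<le> ennreal (2 powr real_of_int (k + 1)) * wmeas \<sigma>2 Q"
proof -
  have "wmeas \<sigma>2 Q \<noteq> 0"
    using mass f_mass_eq_0_if_wmeas_eq_0[OF dyadic_grid_sets[OF grid Q]] by auto
  with mass dyadic_grid_wmeas_finite[OF grid weight_\<sigma>2 Q] obtain g w
    where gw: "f_mass Q = ennreal g" "wmeas \<sigma>2 Q = ennreal w" "0 < g" "0 < w"
    by (cases "f_mass Q" "wmeas \<sigma>2 Q" rule: ennreal2_cases) auto
  then obtain k where "2 powr real_of_int k * w < g" "g \<le> 2 powr real_of_int (k + 1) * w"
    using exists_dyadic_level by blast
  with gw that[of k] show ?thesis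
    by (simp add: above_level_def ennreal_mult''[symmetric] ennreal_lessI ennreal_leI)
qed

lemma frac_avg_product_le_stopping_majorant:
  assumes Q: "Q \<in> D" "Q \<subseteq> R" "x \<in> Q"
  shows "frac_avg \<alpha> Q (\<lambda>y. indicator R y * \<sigma>1 y) * frac_avg \<alpha> Q (\<lambda>y. f y * \<sigma>2 y) \<le> stopping_majorant x"
proof -
  let ?A = "frac_avg \<alpha> Q (\<lambda>y. indicator R y * \<sigma>1 y)"
  have integral_\<sigma>2: "(\<integral>\<^sup>+y\<in>Q. ennreal \<bar>\<sigma>2 y\<bar> \<partial>lebesgue) = wmeas \<sigma>2 Q"
    unfolding wmeas_def using \<sigma>2_nonneg by simp
  consider "f_mass Q = 0" | "f_mass Q = \<infinity>" | "0 < f_mass Q" "f_mass Q < \<infinity>"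
    by (cases "f_mass Q = 0"; cases "f_mass Q = \<infinity>") (auto simp: zero_less_iff_neq_zero less_top)
  then show ?thesis
  proof cases
    case 1
    then have "frac_avg \<alpha> Q (\<lambda>y. f y * \<sigma>2 y) = 0"
      by (simp add: frac_avg_eq_0_iff f_mass_def)
    then show ?thesis
      by simp
  next
    case 2
    then have above: "above_level k Q" for k
      using dyadic_grid_wmeas_finite[OF grid weight_\<sigma>2 Q(1)] by (simp add: above_level_def ennreal_mult_less_top)
    have "frac_avg \<alpha> Q \<sigma>2 \<noteq> 0"
      using 2 f_mass_eq_0_if_wmeas_eq_0[OF dyadic_grid_sets[OF grid Q(1)]]
      by (auto simp: frac_avg_eq_0_iff integral_\<sigma>2)
    moreover have "stopping_majorant x = top" if "?A \<noteq> 0"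
    proof (rule ennreal_eq_top_if_dyadic_multiples_le)
      show "0 < ?A * frac_avg \<alpha> Q \<sigma>2"
        using that \<open>frac_avg \<alpha> Q \<sigma>2 \<noteq> 0\<close> by (simp add: zero_less_iff_neq_zero)
      show "ennreal (2 powr real_of_int k) * (?A * frac_avg \<alpha> Q \<sigma>2) \<le> stopping_majorant x" for k
        using frac_avg_le_stopping_majorant[OF Q above, of "k - 1"] by simp
    qed
    ultimately show ?thesis
      by (cases "?A = 0") auto
  next
    case 3
    then obtain k where k: "above_level k Q" "f_mass Q \<le> ennreal (2 powr real_of_int (k + 1)) * wmeas \<sigma>2 Q"
      using exists_level_of_f_mass[OF Q(1)] by blast
    then have "frac_avg \<alpha> Q (\<lambda>y. f y * \<sigma>2 y) \<le> ennreal (2 powr real_of_int (k + 1)) * frac_avg \<alpha> Q \<sigma>2"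
      by (intro frac_avg_le_mult) (simp add: f_mass_def integral_\<sigma>2)
    then have "?A * frac_avg \<alpha> Q (\<lambda>y. f y * \<sigma>2 y) \<le> ?A * (ennreal (2 powr real_of_int (k + 1)) * frac_avg \<alpha> Q \<sigma>2)"
      by (rule mult_left_mono) simp
    also have "\<dots> = ennreal (2 powr real_of_int (k + 1)) * (?A * frac_avg \<alpha> Q \<sigma>2)"
      by (rule mult.left_commute)
    also have "\<dots> \<le> stopping_majorant x"
      using frac_avg_le_stopping_majorant[OF Q k(1)] .
    finally show ?thesis .
  qed
qed

lemma bmax_frac_dyadic_le_stopping_majorant:
  assumes x: "x \<in> R"
  shows "bmax_frac_dyadic D \<alpha> (\<lambda>y. indicator R y * \<sigma>1 y) (\<lambda>y. f y * \<sigma>2 y) x \<le> stopping_majorant x"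
  unfolding bmax_frac_dyadic_def
proof (rule SUP_least)
  fix Q assume "Q \<in> {Q. Q \<in> D \<and> x \<in> Q}"
  then have Q: "Q \<in> D" "x \<in> Q" by auto
  consider "Q \<subseteq> R" | "R \<subseteq> Q"
    using dyadic_grid_nested[OF grid Q(1) R_in_grid Q(2) x] by blast
  then show "frac_avg \<alpha> Q (\<lambda>y. indicator R y * \<sigma>1 y) * frac_avg \<alpha> Q (\<lambda>y. f y * \<sigma>2 y) \<le> stopping_majorant x"
  proof cases
    case 1
    with Q show ?thesis
      by (intro frac_avg_product_le_stopping_majorant)
  next
    case 2
    have "frac_avg \<alpha> Q (\<lambda>y. indicator R y * \<sigma>1 y) * frac_avg \<alpha> Q (\<lambda>y. f y * \<sigma>2 y)
        \<le> frac_avg \<alpha> R (\<lambda>y. indicator R y * \<sigma>1 y) * frac_avg \<alpha> R (\<lambda>y. f y * \<sigma>2 y)"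
      using 2 alpha f_outside dyadic_grid_sets[OF grid R_in_grid] dyadic_grid_lmeasurable[OF grid Q(1)]
      by (intro mult_mono frac_avg_superset_le) auto
    also have "\<dots> \<le> stopping_majorant x"
      using R_in_grid x by (intro frac_avg_product_le_stopping_majorant) auto
    finally show ?thesis .
  qed
qed

section \<open>Summation over the stopping cubes\<close>

lemma local_max_measurable [measurable]: "local_max P \<in> borel_measurable lebesgue"
  unfolding local_max_def
  using countable_dyadic_grid[OF grid] dyadic_grid_sets[OF grid] by (rule borel_measurable_bmax_frac_dyadic)

lemma epowr_bmax_frac_dyadic_le_sum:
  "epowr (bmax_frac_dyadic D \<alpha> (\<lambda>y. indicator R y * \<sigma>1 y) (\<lambda>y. f y * \<sigma>2 y) x) q * ennreal (v x) * indicator R x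
   \<le> (\<integral>\<^sup>+(k, P). epowr (ennreal (2 powr real_of_int (k + 1)) * local_max P x) q * indicator P x * ennreal (v x)
         \<partial>count_space stopping_pairs)"
proof (cases "x \<in> R")
  case True
  have "epowr (bmax_frac_dyadic D \<alpha> (\<lambda>y. indicator R y * \<sigma>1 y) (\<lambda>y. f y * \<sigma>2 y) x) q
      \<le> epowr (stopping_majorant x) q"
    using bmax_frac_dyadic_le_stopping_majorant[OF True] q_pos by (intro epowr_mono) auto
  also have "\<dots> \<le> (\<integral>\<^sup>+(k, P). epowr (ennreal (2 powr real_of_int (k + 1)) * local_max P x * indicator P x) q
                     \<partial>count_space stopping_pairs)"
    unfolding stopping_majorant_def split_beta' using q_pos by (rule epowr_SUP_le_nn_integral_count_space)
  also have "\<dots> = (\<integral>\<^sup>+(k, P). epowr (ennreal (2 powr real_of_int (k + 1)) * local_max P x) q * indicator P x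
                     \<partial>count_space stopping_pairs)"
    using q_pos by (simp add: epowr_mult epowr_indicator split_beta')
  finally have "epowr (bmax_frac_dyadic D \<alpha> (\<lambda>y. indicator R y * \<sigma>1 y) (\<lambda>y. f y * \<sigma>2 y) x) q * ennreal (v x)
      \<le> (\<integral>\<^sup>+(k, P). epowr (ennreal (2 powr real_of_int (k + 1)) * local_max P x) q * indicator P x
              \<partial>count_space stopping_pairs) * ennreal (v x)"
    by (rule mult_right_mono) simp
  with True show ?thesis
    by (simp add: nn_integral_multc[symmetric] split_beta')
qed simp

lemma nn_integral_stopping_term_le:
  assumes P: "P \<in> stopping_cubes k"
  shows "(\<integral>\<^sup>+x. epowr (ennreal (2 powr real_of_int (k + 1)) * local_max P x) q * indicator P x * ennreal (v x)
            \<partial>lebesgue)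
         \<le> epowr (testing_const \<alpha> p1 p2 q \<sigma>1 \<sigma>2 v) q * epowr (wmeas \<sigma>1 R) (q / p1)
             * epowr (ennreal (2 powr (real_of_int (k + 1) * p2)) * wmeas \<sigma>2 P) (q / p2)"
proof -
  have PD: "P \<in> D" and [measurable]: "P \<in> sets lebesgue"
    using P by (auto simp: stopping_cubes_in_grid stopping_cubes_sets)
  let ?T = "testing_const \<alpha> p1 p2 q \<sigma>1 \<sigma>2 v"
  define c where "c = epowr (ennreal (2 powr real_of_int (k + 1))) q"
  have "(\<integral>\<^sup>+x. epowr (ennreal (2 powr real_of_int (k + 1)) * local_max P x) q * indicator P x * ennreal (v x) \<partial>lebesgue)
      = c * (\<integral>\<^sup>+x\<in>P. epowr (local_max P x) q * ennreal (v x) \<partial>lebesgue)"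
    unfolding c_def using q_pos
    by (subst nn_integral_cmult[symmetric]) (auto simp: epowr_mult mult_ac intro!: nn_integral_cong)
  also have "\<dots> \<le> c * (\<integral>\<^sup>+x\<in>P. epowr (bmax_frac \<alpha> (\<lambda>y. \<sigma>1 y * indicator P y) (\<lambda>y. \<sigma>2 y * indicator P y) x) q
                           * ennreal (v x) \<partial>lebesgue)"
    unfolding local_max_def using q_pos dyadic_grid_is_cube[OF grid]
    by (intro mult_left_mono nn_integral_mono mult_right_mono epowr_mono bmax_frac_dyadic_le_bmax_frac) auto
  also have "\<dots> \<le> c * (epowr ?T q * epowr (wmeas \<sigma>1 P) (q / p1) * epowr (wmeas \<sigma>2 P) (q / p2))"
    using dyadic_grid_is_cube[OF grid PD] q_pos p1 p2 \<sigma>1_nonneg \<sigma>2_nonneg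
      dyadic_grid_wmeas_finite[OF grid weight_\<sigma>1 PD] dyadic_grid_wmeas_finite[OF grid weight_\<sigma>2 PD]
    by (intro mult_left_mono bmax_frac_testing_bound) auto
  also have "\<dots> \<le> c * (epowr ?T q * epowr (wmeas \<sigma>1 R) (q / p1) * epowr (wmeas \<sigma>2 P) (q / p2))"
  proof -
    have "wmeas \<sigma>1 P \<le> wmeas \<sigma>1 R"
      unfolding wmeas_def using stopping_cubes_subset[OF P]
      by (intro nn_integral_mono) (auto simp: indicator_def)
    with q_pos p1 show ?thesis
      by (intro mult_left_mono mult_right_mono epowr_mono) auto
  qed
  also have "\<dots> = epowr ?T q * epowr (wmeas \<sigma>1 R) (q / p1)
                    * epowr (ennreal (2 powr (real_of_int (k + 1) * p2)) * wmeas \<sigma>2 P) (q / p2)"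
    unfolding c_def using q_pos p2
    by (simp add: epowr_mult epowr_ennreal powr_powr mult_ac)
  finally show ?thesis .
qed

lemma stopping_cube_weak_bound:
  assumes P: "P \<in> stopping_cubes k"
  shows "ennreal (2 powr (real_of_int k - 1)) * wmeas \<sigma>2 P
           \<le> (\<integral>\<^sup>+x\<in>P. ennreal (\<bar>f x\<bar> * \<sigma>2 x) * indicator {y. 2 powr (real_of_int k - 1) < \<bar>f y\<bar>} x \<partial>lebesgue)"
    (is "ennreal ?h * ?W \<le> ?X")
proof -
  have [measurable]: "P \<in> sets lebesgue"
    using stopping_cubes_sets[OF P] .
  have W_finite: "?W < \<infinity>"
    using dyadic_grid_wmeas_finite[OF grid weight_\<sigma>2 stopping_cubes_in_grid[OF P]] .
  have "f_mass P \<le> (\<integral>\<^sup>+x. ennreal (\<bar>f x\<bar> * \<sigma>2 x) * indicator {y. ?h < \<bar>f y\<bar>} x * indicator P x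
                       + ennreal ?h * (ennreal (\<sigma>2 x) * indicator P x) \<partial>lebesgue)"
    unfolding f_mass_def
  proof (intro nn_integral_mono)
    fix x
    have "\<bar>f x\<bar> * \<sigma>2 x \<le> ?h * \<sigma>2 x" if "\<bar>f x\<bar> \<le> ?h"
      using that \<sigma>2_nonneg by (intro mult_right_mono) auto
    then show "ennreal \<bar>f x * \<sigma>2 x\<bar> * indicator P x
        \<le> ennreal (\<bar>f x\<bar> * \<sigma>2 x) * indicator {y. ?h < \<bar>f y\<bar>} x * indicator P x
          + ennreal ?h * (ennreal (\<sigma>2 x) * indicator P x)"
      using \<sigma>2_nonneg[of x] by (auto simp: abs_mult indicator_def ennreal_mult''[symmetric] ennreal_leI)
  qed
  also have "\<dots> = ?X + ennreal ?h * ?W"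
  proof -
    have "(\<integral>\<^sup>+x. ennreal ?h * (ennreal (\<sigma>2 x) * indicator P x) \<partial>lebesgue) = ennreal ?h * ?W"
      unfolding wmeas_def by (rule nn_integral_cmult) simp
    then show ?thesis
      by (subst nn_integral_add) auto
  qed
  finally have "f_mass P \<le> ?X + ennreal ?h * ?W" .
  moreover have "ennreal ?h * ?W + ennreal ?h * ?W = ennreal (2 powr real_of_int k) * ?W"
    by (simp add: distrib_right[symmetric] ennreal_plus[symmetric] powr_diff del: ennreal_plus)
  moreover have "ennreal (2 powr real_of_int k) * ?W < f_mass P"
    using stopping_cubes_above_level[OF P] by (simp add: above_level_def)
  ultimately have "ennreal ?h * ?W + ennreal ?h * ?W < ennreal ?h * ?W + ?X"
    by (simp add: add.commute)
  then show ?thesis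
    using W_finite by (subst (asm) ennreal_add_left_cancel_less) (auto simp: ennreal_mult_less_top)
qed

definition level_density :: "int \<Rightarrow> real^'n \<Rightarrow> ennreal" where
  "level_density k x = ennreal (2 powr (real_of_int k * (p2 - 1)))
     * indicator {k. 2 powr (real_of_int k - 1) < \<bar>f x\<bar>} k * ennreal (\<bar>f x\<bar> * \<sigma>2 x)"

lemma level_density_measurable [measurable]: "level_density k \<in> borel_measurable lebesgue"
  unfolding level_density_def indicator_def by measurable

lemma stopping_cube_mass_le:
  assumes P: "P \<in> stopping_cubes k"
  shows "ennreal (2 powr (real_of_int (k + 1) * p2)) * wmeas \<sigma>2 P
           \<le> ennreal (2 powr (p2 + 1)) * (\<integral>\<^sup>+x\<in>P. level_density k x \<partial>lebesgue)"
proof -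
  let ?c = "2 powr (p2 + 1) * 2 powr (real_of_int k * (p2 - 1))"
  have "2 powr (real_of_int (k + 1) * p2) = ?c * 2 powr (real_of_int k - 1)"
    by (simp add: powr_add[symmetric] algebra_simps)
  then have "ennreal (2 powr (real_of_int (k + 1) * p2)) * wmeas \<sigma>2 P
      = ennreal ?c * (ennreal (2 powr (real_of_int k - 1)) * wmeas \<sigma>2 P)"
    by (simp add: ennreal_mult'' mult.assoc)
  also have "\<dots> \<le> ennreal ?c * (\<integral>\<^sup>+x\<in>P. ennreal (\<bar>f x\<bar> * \<sigma>2 x) * indicator {y. 2 powr (real_of_int k - 1) < \<bar>f y\<bar>} x \<partial>lebesgue)"
    using stopping_cube_weak_bound[OF P] by (rule mult_left_mono) simp
  also have "\<dots> = ennreal (2 powr (p2 + 1)) * (\<integral>\<^sup>+x\<in>P. level_density k x \<partial>lebesgue)"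
    using stopping_cubes_sets[OF P]
    by (simp add: level_density_def ennreal_mult'' mult.assoc nn_integral_cmult[symmetric])
       (auto simp: indicator_def mult_ac intro!: nn_integral_cong)
  finally show ?thesis .
qed

lemma sum_level_density_le:
  "(\<integral>\<^sup>+(k, P). level_density k x * indicator P x \<partial>count_space stopping_pairs)
     \<le> ennreal (level_sum_const p2 * (\<bar>f x\<bar> powr p2 * \<sigma>2 x))"
proof -
  let ?I = "{i \<in> stopping_pairs. x \<in> snd i}"
  text \<open>For fixed \<open>k\<close> the cubes in \<open>stopping_cubes k\<close> are disjoint, so \<open>x\<close> sees at most one cube per level.\<close>
  have "inj_on fst ?I"
    using stopping_cubes_disjoint by (fastforce simp: inj_on_def stopping_pairs_def)
  have "(\<integral>\<^sup>+(k, P). level_density k x * indicator P x \<partial>count_space stopping_pairs)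
      = (\<integral>\<^sup>+i. level_density (fst i) x \<partial>count_space ?I)"
    by (simp add: split_beta' nn_integral_count_space_indicator_at)
  also have "\<dots> = (\<integral>\<^sup>+k. level_density k x \<partial>count_space (fst ` ?I))"
    using \<open>inj_on fst ?I\<close> by (intro nn_integral_bij_count_space inj_on_imp_bij_betw)
  also have "\<dots> \<le> (\<integral>\<^sup>+k. level_density k x \<partial>count_space UNIV)"
    by (rule nn_integral_count_space_mono_set) simp
  also have "\<dots> = (\<integral>\<^sup>+k. ennreal (2 powr (real_of_int k * (p2 - 1)))
                       * indicator {k. 2 powr (real_of_int k - 1) < \<bar>f x\<bar>} k \<partial>count_space UNIV)
                   * ennreal (\<bar>f x\<bar> * \<sigma>2 x)"
    unfolding level_density_def by (rule nn_integral_multc) simp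
  also have "\<dots> \<le> ennreal (level_sum_const p2 * \<bar>f x\<bar> powr (p2 - 1)) * ennreal (\<bar>f x\<bar> * \<sigma>2 x)"
    using p2 by (intro mult_right_mono nn_integral_dyadic_levels_below) auto
  also have "\<dots> = ennreal (level_sum_const p2 * (\<bar>f x\<bar> powr p2 * \<sigma>2 x))"
  proof -
    have "level_sum_const p2 * \<bar>f x\<bar> powr (p2 - 1) * (\<bar>f x\<bar> * \<sigma>2 x) = level_sum_const p2 * (\<bar>f x\<bar> powr p2 * \<sigma>2 x)"
      using powr_mult_base[of "\<bar>f x\<bar>" "p2 - 1"] by (simp add: mult_ac)
    then show ?thesis
      using p2 \<sigma>2_nonneg[of x] by (simp add: ennreal_mult[symmetric] level_sum_const_pos less_imp_le)
  qed
  finally show ?thesis .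
qed

lemma sum_stopping_masses_le:
  "(\<integral>\<^sup>+(k, P). ennreal (2 powr (real_of_int (k + 1) * p2)) * wmeas \<sigma>2 P \<partial>count_space stopping_pairs)
     \<le> ennreal (2 powr (p2 + 1) * level_sum_const p2) * (\<integral>\<^sup>+x. ennreal (\<bar>f x\<bar> powr p2 * \<sigma>2 x) \<partial>lebesgue)"
proof -
  have "(\<integral>\<^sup>+(k, P). ennreal (2 powr (real_of_int (k + 1) * p2)) * wmeas \<sigma>2 P \<partial>count_space stopping_pairs)
      \<le> (\<integral>\<^sup>+(k, P). ennreal (2 powr (p2 + 1)) * (\<integral>\<^sup>+x. level_density k x * indicator P x \<partial>lebesgue)
           \<partial>count_space stopping_pairs)"
    by (intro nn_integral_mono) (auto simp: stopping_pairs_def dest: stopping_cube_mass_le)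
  also have "\<dots> = ennreal (2 powr (p2 + 1))
      * (\<integral>\<^sup>+x. (\<integral>\<^sup>+(k, P). level_density k x * indicator P x \<partial>count_space stopping_pairs) \<partial>lebesgue)"
    unfolding split_beta'
  proof (subst nn_integral_count_space_nn_integral)
    fix i assume "i \<in> stopping_pairs"
    then have [measurable]: "snd i \<in> sets lebesgue"
      by (auto simp: stopping_pairs_def stopping_cubes_sets)
    show "(\<lambda>x. level_density (fst i) x * indicator (snd i) x) \<in> borel_measurable lebesgue"
      by measurable
  qed (auto simp: countable_stopping_pairs nn_integral_cmult)
  also have "\<dots> \<le> ennreal (2 powr (p2 + 1))
      * (\<integral>\<^sup>+x. ennreal (level_sum_const p2 * (\<bar>f x\<bar> powr p2 * \<sigma>2 x)) \<partial>lebesgue)"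
    by (intro mult_left_mono nn_integral_mono sum_level_density_le) simp
  also have "\<dots> = ennreal (2 powr (p2 + 1) * level_sum_const p2) * (\<integral>\<^sup>+x. ennreal (\<bar>f x\<bar> powr p2 * \<sigma>2 x) \<partial>lebesgue)"
    using p2 \<sigma>2_nonneg less_imp_le[OF level_sum_const_pos[OF p2]]
    by (simp add: ennreal_mult nn_integral_cmult mult.assoc)
  finally show ?thesis .
qed

lemma nn_integral_bmax_frac_dyadic_le_masses:
  "(\<integral>\<^sup>+x\<in>R. epowr (bmax_frac_dyadic D \<alpha> (\<lambda>y. indicator R y * \<sigma>1 y) (\<lambda>y. f y * \<sigma>2 y) x) q
                * ennreal (v x) \<partial>lebesgue)
   \<le> epowr (testing_const \<alpha> p1 p2 q \<sigma>1 \<sigma>2 v) q * epowr (wmeas \<sigma>1 R) (q / p1)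
       * epowr (\<integral>\<^sup>+(k, P). ennreal (2 powr (real_of_int (k + 1) * p2)) * wmeas \<sigma>2 P
                  \<partial>count_space stopping_pairs) (q / p2)"
proof -
  define c where "c = epowr (testing_const \<alpha> p1 p2 q \<sigma>1 \<sigma>2 v) q * epowr (wmeas \<sigma>1 R) (q / p1)"
  define summand where "summand i x = epowr (ennreal (2 powr real_of_int (fst i + 1)) * local_max (snd i) x) q
                                  * indicator (snd i) x * ennreal (v x)" for i x
  define mass where "mass i = ennreal (2 powr (real_of_int (fst i + 1) * p2)) * wmeas \<sigma>2 (snd i)" for i
  have "(\<integral>\<^sup>+x\<in>R. epowr (bmax_frac_dyadic D \<alpha> (\<lambda>y. indicator R y * \<sigma>1 y) (\<lambda>y. f y * \<sigma>2 y) x) q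
                  * ennreal (v x) \<partial>lebesgue)
      \<le> (\<integral>\<^sup>+x. (\<integral>\<^sup>+i. summand i x \<partial>count_space stopping_pairs) \<partial>lebesgue)"
    using epowr_bmax_frac_dyadic_le_sum unfolding summand_def split_beta' by (intro nn_integral_mono) auto
  also have "\<dots> = (\<integral>\<^sup>+i. (\<integral>\<^sup>+x. summand i x \<partial>lebesgue) \<partial>count_space stopping_pairs)"
  proof (rule nn_integral_count_space_nn_integral[OF countable_stopping_pairs])
    fix i assume "i \<in> stopping_pairs"
    then have [measurable]: "snd i \<in> sets lebesgue"
      by (auto simp: stopping_pairs_def stopping_cubes_sets)
    show "summand i \<in> borel_measurable lebesgue"
      unfolding summand_def by measurable
  qed
  also have "\<dots> \<le> (\<integral>\<^sup>+i. c * epowr (mass i) (q / p2) \<partial>count_space stopping_pairs)"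
    unfolding summand_def mass_def c_def
    by (intro nn_integral_mono) (auto simp: stopping_pairs_def dest: nn_integral_stopping_term_le)
  also have "\<dots> = c * (\<integral>\<^sup>+i. epowr (mass i) (q / p2) \<partial>count_space stopping_pairs)"
    by (rule nn_integral_cmult) simp
  also have "\<dots> \<le> c * epowr (\<integral>\<^sup>+i. mass i \<partial>count_space stopping_pairs) (q / p2)"
    using p2 p2_le_q by (intro mult_left_mono nn_integral_count_space_epowr_le) auto
  finally show ?thesis
    unfolding c_def mass_def split_beta' .
qed

lemma bmax_frac_dyadic_testing_bound:
  "epowr (\<integral>\<^sup>+x\<in>R. epowr (bmax_frac_dyadic D \<alpha> (\<lambda>y. indicator R y * \<sigma>1 y) (\<lambda>y. f y * \<sigma>2 y) x) q
                      * ennreal (v x) \<partial>lebesgue) (1/q)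
   \<le> ennreal ((2 powr (p2 + 1) * level_sum_const p2) powr (1/p2)) * testing_const \<alpha> p1 p2 q \<sigma>1 \<sigma>2 v
       * epowr (wmeas \<sigma>1 R) (1/p1) * wLp_norm p2 \<sigma>2 f"
proof -
  let ?T = "testing_const \<alpha> p1 p2 q \<sigma>1 \<sigma>2 v"
  let ?K = "2 powr (p2 + 1) * level_sum_const p2"
  let ?N = "\<integral>\<^sup>+x. ennreal (\<bar>f x\<bar> powr p2 * \<sigma>2 x) \<partial>lebesgue"
  have "(\<integral>\<^sup>+x\<in>R. epowr (bmax_frac_dyadic D \<alpha> (\<lambda>y. indicator R y * \<sigma>1 y) (\<lambda>y. f y * \<sigma>2 y) x) q
                  * ennreal (v x) \<partial>lebesgue)
      \<le> epowr ?T q * epowr (wmeas \<sigma>1 R) (q / p1) * epowr (ennreal ?K * ?N) (q / p2)"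
    by (rule order_trans[OF nn_integral_bmax_frac_dyadic_le_masses])
       (use sum_stopping_masses_le p2 q_pos in \<open>intro mult_left_mono epowr_mono, auto\<close>)
  then have "epowr (\<integral>\<^sup>+x\<in>R. epowr (bmax_frac_dyadic D \<alpha> (\<lambda>y. indicator R y * \<sigma>1 y) (\<lambda>y. f y * \<sigma>2 y) x) q
                      * ennreal (v x) \<partial>lebesgue) (1/q)
      \<le> epowr (epowr ?T q * epowr (wmeas \<sigma>1 R) (q / p1) * epowr (ennreal ?K * ?N) (q / p2)) (1/q)"
    using q_pos by (intro epowr_mono) auto
  also have "\<dots> = ennreal (?K powr (1/p2)) * ?T * epowr (wmeas \<sigma>1 R) (1/p1) * wLp_norm p2 \<sigma>2 f"
    unfolding wLp_norm_def using q_pos p1 p2 less_imp_le[OF level_sum_const_pos[OF p2]]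
    by (simp add: epowr_mult epowr_epowr epowr_ennreal powr_powr mult_ac)
  finally show ?thesis .
qed

end

theorem lemma3p1:
  fixes \<alpha> p1 p2 p q :: real
  assumes "0 \<le> \<alpha>" and "\<alpha> < 2 * real CARD('n)"
    and "1 < p1" and "1 < p2"
    and "1 / p = 1 / p1 + 1 / p2"
    and "1 / q = 1 / p - \<alpha> / real CARD('n)"
    and "p2 \<le> q"
  shows "\<exists>C>0. \<forall>(w1 :: real^'n \<Rightarrow> real) w2 v D R f.
           weight w1 \<and> weight w2 \<and> weight v \<and>
           weight (\<lambda>x. w1 x powr (1 - dual_exp p1)) \<and>
           weight (\<lambda>x. w2 x powr (1 - dual_exp p2)) \<and>
           (AE x in lebesgue. 0 < w1 x) \<and> (AE x in lebesgue. 0 < w2 x) \<and>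
           dyadic_grid D \<and> R \<in> D \<and>
           f \<in> borel_measurable lebesgue \<and> (\<forall>x. x \<notin> R \<longrightarrow> f x = 0)
           \<longrightarrow>
           epowr (\<integral>\<^sup>+ x\<in>R. epowr (bmax_frac_dyadic D \<alpha>
                       (\<lambda>y. indicator R y * w1 y powr (1 - dual_exp p1))
                       (\<lambda>y. f y * w2 y powr (1 - dual_exp p2)) x) q * ennreal (v x) \<partial>lebesgue) (1/q)
           \<le> ennreal C * testing_const \<alpha> p1 p2 q
                 (\<lambda>x. w1 x powr (1 - dual_exp p1)) (\<lambda>x. w2 x powr (1 - dual_exp p2)) v
               * epowr (wmeas (\<lambda>x. w1 x powr (1 - dual_exp p1)) R) (1/p1)
               * wLp_norm p2 (\<lambda>x. w2 x powr (1 - dual_exp p2)) f"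
proof (intro exI[of _ "(2 powr (p2 + 1) * level_sum_const p2) powr (1/p2)"] conjI allI impI)
  show "0 < (2 powr (p2 + 1) * level_sum_const p2) powr (1/p2)"
    using level_sum_const_pos[OF assms(4)] by simp
qed (use assms(2-4,7) in \<open>auto intro!: dyadic_testing_setup.bmax_frac_dyadic_testing_bound dyadic_testing_setup.intro\<close>)

end
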